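(* Let $\gamma,\sigma:[a,b]\to V$ be continuous paths of bounded variation and let $\phi:\mathbb{N}\cup\{0\}\to\mathbb{R}$ be such that $\sum_kC^k|\phi(k)|(k!)^{-2}<\infty$ for every $C>0$. Then the truncated kernel $K_\phi^{(N)}(s,t)$ converges to $K_\phi^{\gamma,\sigma}(s,t)$ as $N\to\infty$, and \[ \left|K_\phi^{\gamma,\sigma}(s,t)-K_\phi^{(N)}(s,t)\right|\le\sum_{k=N+1}^\infty|\phi(k)|\,\frac{(L_s(\gamma)L_t(\sigma))^k}{(k!)^2}. \]
   Context: $V$ is a finite-dimensional real inner product space, $\langle\cdot,\cdot\rangle_k$ the induced Hilbert–Schmidt inner product on $V^{\otimes k}$. Signature: $S(\gamma)^0=1$, $S(\gamma)^k_{s,t}=\int_{s<u_1<\dots<u_k<t}d\gamma_{u_1}\otimes\cdots\otimes d\gamma_{u_k}$. $K_\phi^{\gamma,\sigma}(s,t)=\sum_{k\ge0}\phi(k)\langle S(\gamma)^k_{a,s},S(\sigma)^k_{a,t}\rangle_k$ and $K_\phi^{(N)}(s,t)=\sum_{k=0}^N\phi(k)\langle S(\gamma)^k_{a,s},S(\sigma)^k_{a,t}\rangle_k$. $L_s(\gamma)$ is the length (1-variation) of $\gamma|_{[a,s]}$. *)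

theory Defs
  imports "HOL-Analysis.Analysis"
begin

definition interval_partition :: "real \<Rightarrow> real \<Rightarrow> real list \<Rightarrow> bool" where
  "interval_partition a b xs \<longleftrightarrow> xs \<noteq> [] \<and> hd xs = a \<and> last xs = b \<and> sorted xs"

definition variation_sum :: "(real \<Rightarrow> 'v::real_normed_vector) \<Rightarrow> real list \<Rightarrow> real" where
  "variation_sum \<gamma> xs = (\<Sum>i<length xs - 1. norm (\<gamma> (xs ! Suc i) - \<gamma> (xs ! i)))"

definition bounded_variation_on :: "(real \<Rightarrow> 'v::real_normed_vector) \<Rightarrow> real \<Rightarrow> real \<Rightarrow> bool" where
  "bounded_variation_on \<gamma> a b \<longleftrightarrow>
     bdd_above {variation_sum \<gamma> xs | xs. interval_partition a b xs}"

definition path_len :: "(real \<Rightarrow> 'v::real_normed_vector) \<Rightarrow> real \<Rightarrow> real \<Rightarrow> real" where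
  "path_len \<gamma> a s = Sup {variation_sum \<gamma> xs | xs. interval_partition a s xs}"

definition tagged_interval_partition :: "real \<Rightarrow> real \<Rightarrow> real list \<Rightarrow> real list \<Rightarrow> bool" where
  "tagged_interval_partition a b xs ts \<longleftrightarrow> interval_partition a b xs \<and>
     length ts = length xs - 1 \<and>
     (\<forall>i < length ts. xs ! i \<le> ts ! i \<and> ts ! i \<le> xs ! Suc i)"

definition mesh_less :: "real list \<Rightarrow> real \<Rightarrow> bool" where
  "mesh_less xs \<delta> \<longleftrightarrow> (\<forall>i < length xs - 1. xs ! Suc i - xs ! i < \<delta>)"

definition RS_sum :: "(real \<Rightarrow> real) \<Rightarrow> (real \<Rightarrow> real) \<Rightarrow> real list \<Rightarrow> real list \<Rightarrow> real" where
  "RS_sum f g xs ts = (\<Sum>i<length xs - 1. f (ts ! i) * (g (xs ! Suc i) - g (xs ! i)))"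

definition has_RS_integral :: "(real \<Rightarrow> real) \<Rightarrow> (real \<Rightarrow> real) \<Rightarrow> real \<Rightarrow> real \<Rightarrow> real \<Rightarrow> bool" where
  "has_RS_integral f g a b I \<longleftrightarrow>
     (\<forall>\<epsilon>>0. \<exists>\<delta>>0. \<forall>xs ts. tagged_interval_partition a b xs ts \<and> mesh_less xs \<delta> \<longrightarrow>
         \<bar>RS_sum f g xs ts - I\<bar> < \<epsilon>)"

definition RS_integral :: "(real \<Rightarrow> real) \<Rightarrow> (real \<Rightarrow> real) \<Rightarrow> real \<Rightarrow> real \<Rightarrow> real" where
  "RS_integral f g a b = (THE I. has_RS_integral f g a b I)"

text \<open>Tensors in V^{\<otimes>k} are represented by their coordinates w.r.t. the orthonormal basis
  {e_{i_1} \<otimes> ... \<otimes> e_{i_k}}, i.e. as functions on words (of length k) over \<open>Basis\<close>.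
  \<open>iter_int \<gamma> a t ws\<close>, with \<open>ws\<close> the REVERSED word, is the iterated integral
  \<open>\<integral>_{a<u_1<...<u_k<t} d\<gamma>^{i_1}_{u_1} ... d\<gamma>^{i_k}_{u_k}\<close>, computed recursively
  with the outermost (last) letter first.\<close>
fun iter_int :: "(real \<Rightarrow> 'v::euclidean_space) \<Rightarrow> real \<Rightarrow> real \<Rightarrow> 'v list \<Rightarrow> real" where
  "iter_int \<gamma> a t [] = 1"
| "iter_int \<gamma> a t (e # ws) = RS_integral (\<lambda>u. iter_int \<gamma> a u ws) (\<lambda>u. \<gamma> u \<bullet> e) a t"

definition signature_coord :: "(real \<Rightarrow> 'v::euclidean_space) \<Rightarrow> real \<Rightarrow> real \<Rightarrow> 'v list \<Rightarrow> real" where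
  "signature_coord \<gamma> a t w = iter_int \<gamma> a t (rev w)"

definition words :: "nat \<Rightarrow> 'v::euclidean_space list set" where
  "words k = {w. length w = k \<and> set w \<subseteq> Basis}"

definition sig_inner :: "nat \<Rightarrow> (real \<Rightarrow> 'v::euclidean_space) \<Rightarrow> (real \<Rightarrow> 'v) \<Rightarrow> real \<Rightarrow> real \<Rightarrow> real \<Rightarrow> real" where
  "sig_inner k \<gamma> \<sigma> a s t = (\<Sum>w\<in>words k. signature_coord \<gamma> a s w * signature_coord \<sigma> a t w)"

definition sig_kernel :: "(nat \<Rightarrow> real) \<Rightarrow> (real \<Rightarrow> 'v::euclidean_space) \<Rightarrow> (real \<Rightarrow> 'v) \<Rightarrow> real \<Rightarrow> real \<Rightarrow> real \<Rightarrow> real" where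
  "sig_kernel \<phi> \<gamma> \<sigma> a s t = (\<Sum>k. \<phi> k * sig_inner k \<gamma> \<sigma> a s t)"

definition sig_kernel_trunc :: "nat \<Rightarrow> (nat \<Rightarrow> real) \<Rightarrow> (real \<Rightarrow> 'v::euclidean_space) \<Rightarrow> (real \<Rightarrow> 'v) \<Rightarrow> real \<Rightarrow> real \<Rightarrow> real \<Rightarrow> real" where
  "sig_kernel_trunc N \<phi> \<gamma> \<sigma> a s t = (\<Sum>k\<le>N. \<phi> k * sig_inner k \<gamma> \<sigma> a s t)"

end

theory Submission
  imports Defs
begin

(* The heart of the argument is the factorial decay of the signature: the Hilbert--Schmidt norm
   of S(gamma)^k_{a,u} is at most L_u(gamma)^k / k!. It follows by induction on k from
   S^{k+1}_{a,u} = int_a^u S^k_{a,v} (x) d gamma_v: a left-tagged Riemann--Stieltjes sum is a sum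
   of tensors S^k_{a,x_i} (x) (gamma(x_{i+1}) - gamma(x_i)), whose norms are at most
   L_{x_i}^k / k! * (L_{x_{i+1}} - L_{x_i}), a lower Riemann sum of int x^k / k! dx.
   Cauchy--Schwarz then bounds the k-th term of the kernel by
   |phi k| (L_s(gamma) L_t(sigma))^k / (k!)^2, which is summable by the hypothesis on phi, so the series converges and its tail is bounded termwise.
   Since the integral is a definite description, the induction also needs every iterated integral
   to exist: a continuous integrand is uniformly approximated by step functions, whose sums against a
   continuous integrator of bounded variation settle down as the mesh shrinks, and the indefinite
   integral is again continuous. *)

section \<open>Partitions of an interval\<close>

lemma interval_partition_nth_mono:
  assumes "interval_partition a b xs" "i \<le> j" "j < length xs"
  shows "xs ! i \<le> xs ! j"
  using assms unfolding interval_partition_def by (simp add: sorted_nth_mono)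

lemma interval_partition_endpoints:
  assumes "interval_partition a b xs"
  shows "xs ! 0 = a" "xs ! (length xs - 1) = b" "length xs = Suc (length xs - 1)"
  using assms unfolding interval_partition_def by (auto simp: hd_conv_nth last_conv_nth)

lemma interval_partition_nth_bounds:
  assumes "interval_partition a b xs" "i < length xs"
  shows "a \<le> xs ! i \<and> xs ! i \<le> b"
  using interval_partition_nth_mono[OF assms(1), of 0 i]
    interval_partition_nth_mono[OF assms(1), of i "length xs - 1"] interval_partition_endpoints[OF assms(1)] assms(2) by auto

lemma interval_partition_set_bounds:
  assumes "interval_partition a b xs" "x \<in> set xs"
  shows "a \<le> x \<and> x \<le> b"
  using assms interval_partition_nth_bounds by (metis in_set_conv_nth)

lemma interval_partition_le: "interval_partition a b xs \<Longrightarrow> a \<le> b"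
  using interval_partition_nth_bounds[of a b xs 0] unfolding interval_partition_def by auto

lemma interval_partition_telescope:
  assumes "interval_partition a b xs"
  shows "(\<Sum>i<length xs - 1. g (xs ! Suc i) - g (xs ! i)) = g b - (g a :: 'a::ab_group_add)"
  using sum_lessThan_telescope[where f = "\<lambda>i. g (xs ! i)"] interval_partition_endpoints[OF assms]
  by simp

lemma tagged_interval_partition_tag_bounds:
  assumes "tagged_interval_partition a b xs ts" "i < length ts"
  shows "a \<le> ts ! i \<and> ts ! i \<le> b"
proof -
  have ip: "interval_partition a b xs" and "Suc i < length xs"
    and "xs ! i \<le> ts ! i \<and> ts ! i \<le> xs ! Suc i"
    using assms unfolding tagged_interval_partition_def by auto
  then show ?thesis
    using interval_partition_nth_bounds[OF ip, of i] interval_partition_nth_bounds[OF ip, of "Suc i"]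
    by auto
qed

lemma tagged_interval_partition_tag_mono:
  assumes "tagged_interval_partition a b xs ts" "i \<le> j" "j < length ts"
  shows "ts ! i \<le> ts ! j"
proof (cases "i = j")
  case False
  have ip: "interval_partition a b xs" and len: "length ts = length xs - 1"
    and tg: "\<And>i. i < length ts \<Longrightarrow> xs ! i \<le> ts ! i \<and> ts ! i \<le> xs ! Suc i"
    using assms unfolding tagged_interval_partition_def by auto
  have "ts ! i \<le> xs ! Suc i" using tg[of i] assms by auto
  also have "\<dots> \<le> xs ! j" using interval_partition_nth_mono[OF ip, of "Suc i" j] False assms len by auto
  also have "\<dots> \<le> ts ! j" using tg[of j] assms by auto
  finally show ?thesis .
qed simp

lemma tagged_interval_partition_left_tags:
  "interval_partition a b xs \<Longrightarrow> tagged_interval_partition a b xs (butlast xs)"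
  unfolding tagged_interval_partition_def
  by (auto simp: nth_butlast intro: interval_partition_nth_mono)

lemma mesh_less_mono: "mesh_less xs \<delta> \<Longrightarrow> \<delta> \<le> \<delta>' \<Longrightarrow> mesh_less xs \<delta>'"
  unfolding mesh_less_def by force

definition uniform_partition :: "real \<Rightarrow> real \<Rightarrow> nat \<Rightarrow> real list" where
  "uniform_partition a b n = map (\<lambda>i. a + (b - a) * real i / real n) [0..<Suc n]"

lemma interval_partition_uniform_partition:
  assumes "a \<le> b" "n > 0"
  shows "interval_partition a b (uniform_partition a b n)"
proof -
  have "sorted (uniform_partition a b n)"
    unfolding uniform_partition_def sorted_iff_nth_mono
    using assms by (auto simp del: upt_Suc intro!: divide_right_mono mult_left_mono)
  moreover have "last (uniform_partition a b n) = b"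
    unfolding uniform_partition_def using assms by (simp add: last_map)
  moreover have "hd (uniform_partition a b n) = a"
    unfolding uniform_partition_def by (simp add: hd_map upt_conv_Cons del: upt_Suc)
  moreover have "uniform_partition a b n \<noteq> []" unfolding uniform_partition_def by simp
  ultimately show ?thesis unfolding interval_partition_def by blast
qed

lemma mesh_less_uniform_partition:
  assumes "n > 0" "(b - a) / n < \<delta>"
  shows "mesh_less (uniform_partition a b n) \<delta>"
proof -
  have "uniform_partition a b n ! Suc i - uniform_partition a b n ! i = (b - a) / n" if "i < n" for i
    using that assms unfolding uniform_partition_def by (simp del: upt_Suc add: field_simps nth_append)
  then show ?thesis using assms unfolding mesh_less_def by (simp add: uniform_partition_def)
qed

lemma ex_nat_divide_less:
  fixes c \<delta> :: real
  assumes "\<delta> > 0"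
  obtains n :: nat where "n > 0" "c / n < \<delta>"
proof -
  obtain n :: nat where n: "c / \<delta> < n" using reals_Archimedean2 by blast
  have "c < \<delta> * n" using n assms by (simp add: divide_less_eq mult.commute)
  also have "\<dots> \<le> \<delta> * real (Suc n)" using assms by simp
  finally have "c / real (Suc n) < \<delta>" by (simp add: divide_less_eq mult.commute)
  then show ?thesis using that[of "Suc n"] by simp
qed

lemma ex_fine_interval_partition:
  assumes "a \<le> b" "\<delta> > 0"
  obtains xs where "interval_partition a b xs" "mesh_less xs \<delta>"
proof -
  obtain n :: nat where "n > 0" "(b - a) / n < \<delta>" using ex_nat_divide_less[OF assms(2)] .
  then show ?thesis
    using that interval_partition_uniform_partition[OF assms(1)] mesh_less_uniform_partition by blast
qed

section \<open>Variation and path length\<close>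

lemma variation_sum_nonneg: "0 \<le> variation_sum \<gamma> xs"
  unfolding variation_sum_def by (simp add: sum_nonneg)

lemma variation_sum_Cons:
  assumes "xs \<noteq> []"
  shows "variation_sum \<gamma> (x # xs) = norm (\<gamma> (hd xs) - \<gamma> x) + variation_sum \<gamma> xs"
proof -
  obtain y ys where xs: "xs = y # ys" using assms by (cases xs) auto
  show ?thesis
    unfolding variation_sum_def xs by (simp add: sum.lessThan_Suc_shift del: sum.lessThan_Suc)
qed

lemma variation_sum_snoc:
  assumes "xs \<noteq> []"
  shows "variation_sum \<gamma> (xs @ [y]) = variation_sum \<gamma> xs + norm (\<gamma> y - \<gamma> (last xs))"
proof -
  obtain n where n: "length xs = Suc n" using assms by (cases xs) auto
  have "variation_sum \<gamma> (xs @ [y])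
      = (\<Sum>i<n. norm (\<gamma> ((xs @ [y]) ! Suc i) - \<gamma> ((xs @ [y]) ! i))) + norm (\<gamma> y - \<gamma> (xs ! n))"
    unfolding variation_sum_def using n by (simp add: nth_append)
  also have "(\<Sum>i<n. norm (\<gamma> ((xs @ [y]) ! Suc i) - \<gamma> ((xs @ [y]) ! i))) = variation_sum \<gamma> xs"
    unfolding variation_sum_def using n by (intro sum.cong) (auto simp: nth_append)
  finally show ?thesis using n assms by (simp add: last_conv_nth)
qed

lemma variation_sum_inner_le:
  "variation_sum (\<lambda>u. \<gamma> u \<bullet> e) xs \<le> norm e * variation_sum \<gamma> xs"
  unfolding variation_sum_def sum_distrib_left
proof (rule sum_mono)
  fix i
  have "norm (\<gamma> (xs ! Suc i) \<bullet> e - \<gamma> (xs ! i) \<bullet> e) = \<bar>(\<gamma> (xs ! Suc i) - \<gamma> (xs ! i)) \<bullet> e\<bar>"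
    by (simp add: inner_diff_left)
  also have "\<dots> \<le> norm (\<gamma> (xs ! Suc i) - \<gamma> (xs ! i)) * norm e" by (rule Cauchy_Schwarz_ineq2)
  finally show "norm (\<gamma> (xs ! Suc i) \<bullet> e - \<gamma> (xs ! i) \<bullet> e) \<le> norm e * norm (\<gamma> (xs ! Suc i) - \<gamma> (xs ! i))"
    by (simp add: mult.commute)
qed

lemma variation_sum_le_path_len:
  assumes bv: "bounded_variation_on \<gamma> a b" and "a \<le> u" "v \<le> b" and ip: "interval_partition u v xs"
  shows "variation_sum \<gamma> xs \<le> path_len \<gamma> a b"
proof -
  have ne: "xs \<noteq> []" and "sorted xs" using ip unfolding interval_partition_def by auto
  have "\<forall>x\<in>set xs. a \<le> x \<and> x \<le> b" using interval_partition_set_bounds[OF ip] assms(2,3) by fastforce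
  then have "interval_partition a b (a # xs @ [b])"
    using \<open>sorted xs\<close> interval_partition_le[OF ip] assms(2,3)
    unfolding interval_partition_def by (auto simp: sorted_append)
  then have "variation_sum \<gamma> (a # xs @ [b]) \<le> path_len \<gamma> a b"
    using bv unfolding path_len_def bounded_variation_on_def by (auto intro!: cSup_upper)
  moreover have "variation_sum \<gamma> xs \<le> variation_sum \<gamma> (a # xs @ [b])"
    by (simp add: variation_sum_Cons variation_sum_snoc ne)
  ultimately show ?thesis by linarith
qed

lemma bdd_above_variation_sums:
  assumes "bounded_variation_on \<gamma> a b" "y \<le> b"
  shows "bdd_above {variation_sum \<gamma> xs | xs. interval_partition a y xs}"
  using variation_sum_le_path_len[OF assms(1) order_refl assms(2)] unfolding bdd_above_def by blast

lemma path_len_nonneg: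
  assumes "bounded_variation_on \<gamma> a b" "a \<le> x" "x \<le> b"
  shows "0 \<le> path_len \<gamma> a x"
proof -
  have "interval_partition a x [a, x]" using assms unfolding interval_partition_def by simp
  then have "variation_sum \<gamma> [a, x] \<le> path_len \<gamma> a x"
    unfolding path_len_def using bdd_above_variation_sums[OF assms(1,3)] by (auto intro!: cSup_upper)
  then show ?thesis using variation_sum_nonneg[of \<gamma> "[a, x]"] by linarith
qed

lemma path_len_increment:
  assumes bv: "bounded_variation_on \<gamma> a b" and "a \<le> x" "x \<le> y" "y \<le> b"
  shows "path_len \<gamma> a x + norm (\<gamma> y - \<gamma> x) \<le> path_len \<gamma> a y"
proof -
  have ne: "{variation_sum \<gamma> xs | xs. interval_partition a x xs} \<noteq> {}"
    using assms unfolding interval_partition_def by (auto intro!: exI[of _ "[a, x]"])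
  have "path_len \<gamma> a x \<le> path_len \<gamma> a y - norm (\<gamma> y - \<gamma> x)"
    unfolding path_len_def[of \<gamma> a x]
  proof (rule cSup_least[OF ne])
    fix s assume "s \<in> {variation_sum \<gamma> xs | xs. interval_partition a x xs}"
    then obtain xs where s: "s = variation_sum \<gamma> xs" and ip: "interval_partition a x xs" by blast
    have ne': "xs \<noteq> []" and l: "last xs = x" using ip unfolding interval_partition_def by auto
    have "interval_partition a y (xs @ [y])"
      using ip assms(3) interval_partition_set_bounds[OF ip] unfolding interval_partition_def
      by (force simp: sorted_append)
    then have "variation_sum \<gamma> (xs @ [y]) \<le> path_len \<gamma> a y"
      unfolding path_len_def using bdd_above_variation_sums[OF bv assms(4)] by (auto intro!: cSup_upper)
    then show "s \<le> path_len \<gamma> a y - norm (\<gamma> y - \<gamma> x)"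
      using variation_sum_snoc[OF ne', of \<gamma> y] l s by simp
  qed
  then show ?thesis by simp
qed

section \<open>Riemann--Stieltjes sums and integrals\<close>

lemma RS_sum_diff_le:
  assumes "tagged_interval_partition a b xs ts" "0 \<le> \<eta>"
    "\<forall>i<length ts. \<bar>f (ts ! i) - h (ts ! i)\<bar> \<le> \<eta>" "variation_sum g xs \<le> B"
  shows "\<bar>RS_sum f g xs ts - RS_sum h g xs ts\<bar> \<le> \<eta> * B"
proof -
  have len: "length ts = length xs - 1"
    using assms(1) unfolding tagged_interval_partition_def by auto
  have "\<bar>RS_sum f g xs ts - RS_sum h g xs ts\<bar>
      = \<bar>\<Sum>i<length xs - 1. (f (ts ! i) - h (ts ! i)) * (g (xs ! Suc i) - g (xs ! i))\<bar>"
    unfolding RS_sum_def left_diff_distrib sum_subtractf by simp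
  also have "\<dots> \<le> (\<Sum>i<length xs - 1. \<bar>(f (ts ! i) - h (ts ! i)) * (g (xs ! Suc i) - g (xs ! i))\<bar>)"
    by (rule sum_abs)
  also have "\<dots> \<le> (\<Sum>i<length xs - 1. \<eta> * \<bar>g (xs ! Suc i) - g (xs ! i)\<bar>)"
    using assms(3) len by (intro sum_mono) (simp add: abs_mult mult_right_mono)
  also have "\<dots> = \<eta> * variation_sum g xs"
    unfolding variation_sum_def by (simp add: sum_distrib_left)
  also have "\<dots> \<le> \<eta> * B" using assms(2,4) by (simp add: mult_left_mono)
  finally show ?thesis .
qed

lemma RS_sum_const:
  assumes "interval_partition a b xs"
  shows "RS_sum (\<lambda>_. c) g xs ts = c * (g b - g a)"
  unfolding RS_sum_def sum_distrib_left[symmetric] interval_partition_telescope[OF assms] ..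

lemma has_RS_integral_unique:
  assumes "a \<le> b" "has_RS_integral f g a b I" "has_RS_integral f g a b J"
  shows "I = J"
proof (rule ccontr)
  assume "I \<noteq> J"
  define e where "e = \<bar>I - J\<bar> / 2"
  have e: "e > 0" using \<open>I \<noteq> J\<close> by (simp add: e_def)
  obtain d1 where d1: "d1 > 0" "\<And>xs ts. tagged_interval_partition a b xs ts \<and> mesh_less xs d1 \<Longrightarrow>
         \<bar>RS_sum f g xs ts - I\<bar> < e"
    using assms(2) e unfolding has_RS_integral_def by meson
  obtain d2 where d2: "d2 > 0" "\<And>xs ts. tagged_interval_partition a b xs ts \<and> mesh_less xs d2 \<Longrightarrow>
         \<bar>RS_sum f g xs ts - J\<bar> < e"
    using assms(3) e unfolding has_RS_integral_def by meson
  obtain xs where xs: "interval_partition a b xs" "mesh_less xs (min d1 d2)"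
    using ex_fine_interval_partition[OF assms(1)] d1(1) d2(1) by (metis min_less_iff_conj)
  then have "\<bar>RS_sum f g xs (butlast xs) - I\<bar> < e" "\<bar>RS_sum f g xs (butlast xs) - J\<bar> < e"
    using d1(2) d2(2) tagged_interval_partition_left_tags mesh_less_mono by auto
  then show False unfolding e_def by (simp add: abs_if split: if_splits)
qed

lemma RS_integral_eqI:
  "a \<le> b \<Longrightarrow> has_RS_integral f g a b I \<Longrightarrow> RS_integral f g a b = I"
  unfolding RS_integral_def by (blast intro: the_equality has_RS_integral_unique)

lemma has_RS_integral_near_const:
  assumes "a \<le> b" "has_RS_integral f g a b I" "0 \<le> \<eta>"
    "\<forall>x\<in>{a..b}. \<bar>f x - c\<bar> \<le> \<eta>"
    "\<forall>xs. interval_partition a b xs \<longrightarrow> variation_sum g xs \<le> B"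
  shows "\<bar>I - c * (g b - g a)\<bar> \<le> \<eta> * B"
proof (rule field_le_epsilon)
  fix e :: real assume e: "e > 0"
  obtain d where d: "d > 0" "\<And>xs ts. tagged_interval_partition a b xs ts \<and> mesh_less xs d \<Longrightarrow>
         \<bar>RS_sum f g xs ts - I\<bar> < e"
    using assms(2) e unfolding has_RS_integral_def by meson
  obtain xs where xs: "interval_partition a b xs" "mesh_less xs d"
    using ex_fine_interval_partition[OF assms(1) d(1)] .
  note t = tagged_interval_partition_left_tags[OF xs(1)]
  have "\<bar>RS_sum f g xs (butlast xs) - I\<bar> < e" using d(2) t xs(2) by blast
  moreover have "\<bar>RS_sum f g xs (butlast xs) - RS_sum (\<lambda>_. c) g xs (butlast xs)\<bar> \<le> \<eta> * B"
    using RS_sum_diff_le[OF t assms(3)] tagged_interval_partition_tag_bounds[OF t] assms(4,5) xs(1)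
    by auto
  ultimately show "\<bar>I - c * (g b - g a)\<bar> \<le> \<eta> * B + e"
    using RS_sum_const[OF xs(1), of c g] by (simp only: abs_le_iff abs_less_iff) linarith
qed

lemma nth_butlast_append_partition:
  assumes "interval_partition a u xs1" "interval_partition u v xs2"
  shows "i \<le> length xs1 - 1 \<Longrightarrow> (butlast xs1 @ xs2) ! i = xs1 ! i"
    and "(butlast xs1 @ xs2) ! (length xs1 - 1 + j) = xs2 ! j"
  using interval_partition_endpoints[OF assms(1)] interval_partition_endpoints[OF assms(2)]
  by (auto simp: nth_append nth_butlast le_less)

lemma sum_lessThan_add_split:
  fixes F :: "nat \<Rightarrow> 'a::comm_monoid_add"
  assumes "\<And>i. i < m \<Longrightarrow> F i = G i" "\<And>j. j < n \<Longrightarrow> F (m + j) = H j"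
  shows "(\<Sum>i<m + n. F i) = (\<Sum>i<m. G i) + (\<Sum>j<n. H j)"
proof -
  have "(\<Sum>i<m + n. F i) = (\<Sum>i<m. F i) + (\<Sum>j<n. F (m + j))"
    by (induction n) (simp_all add: add.assoc)
  then show ?thesis using assms by simp
qed

lemma less_add_cases_nat:
  fixes i m n :: nat
  assumes "i < m + n"
  obtains "i < m" | j where "i = m + j" "j < n"
  using assms by (metis add_diff_inverse_nat nat_add_left_cancel_less)

lemma tagged_interval_partition_append:
  assumes t1: "tagged_interval_partition a u xs1 ts1" and t2: "tagged_interval_partition u v xs2 ts2"
  shows "tagged_interval_partition a v (butlast xs1 @ xs2) (ts1 @ ts2)"
proof -
  have ip1: "interval_partition a u xs1" and len1: "length ts1 = length xs1 - 1"
    and tg1: "\<And>i. i < length ts1 \<Longrightarrow> xs1 ! i \<le> ts1 ! i \<and> ts1 ! i \<le> xs1 ! Suc i"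
    using t1 unfolding tagged_interval_partition_def by auto
  have ip2: "interval_partition u v xs2" and len2: "length ts2 = length xs2 - 1"
    and tg2: "\<And>i. i < length ts2 \<Longrightarrow> xs2 ! i \<le> ts2 ! i \<and> ts2 ! i \<le> xs2 ! Suc i"
    using t2 unfolding tagged_interval_partition_def by auto
  note A = nth_butlast_append_partition[OF ip1 ip2]
  note e1 = interval_partition_endpoints[OF ip1] and e2 = interval_partition_endpoints[OF ip2]
  have "sorted (butlast xs1 @ xs2)"
    unfolding sorted_append
    using ip1 ip2 interval_partition_set_bounds[OF ip1] interval_partition_set_bounds[OF ip2]
    unfolding interval_partition_def by (force dest: in_set_butlastD intro: sorted_butlast)
  moreover have "(butlast xs1 @ xs2) ! 0 = a" using A(1)[of 0] e1 by simp
  ultimately have ip: "interval_partition a v (butlast xs1 @ xs2)"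
    using ip2 unfolding interval_partition_def by (simp add: hd_conv_nth)
  have "(butlast xs1 @ xs2) ! i \<le> (ts1 @ ts2) ! i \<and> (ts1 @ ts2) ! i \<le> (butlast xs1 @ xs2) ! Suc i"
    if "i < length ts1 + length ts2" for i
    using that
  proof (cases rule: less_add_cases_nat)
    case 1
    then show ?thesis using A(1)[of i] A(1)[of "Suc i"] tg1[of i] len1 by (simp add: nth_append)
  next
    case (2 j)
    then show ?thesis using A(2)[of j] A(2)[of "Suc j"] tg2[of j] len1 by (simp add: nth_append)
  qed
  then show ?thesis
    using ip len1 len2 e1 e2 unfolding tagged_interval_partition_def by simp
qed

lemma mesh_less_append:
  assumes ip1: "interval_partition a u xs1" and ip2: "interval_partition u v xs2"
    and "mesh_less xs1 \<delta>" "mesh_less xs2 \<delta>"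
  shows "mesh_less (butlast xs1 @ xs2) \<delta>"
proof -
  note A = nth_butlast_append_partition[OF ip1 ip2]
  note e1 = interval_partition_endpoints[OF ip1] and e2 = interval_partition_endpoints[OF ip2]
  have "(butlast xs1 @ xs2) ! Suc i - (butlast xs1 @ xs2) ! i < \<delta>"
    if "i < (length xs1 - 1) + (length xs2 - 1)" for i
    using that
  proof (cases rule: less_add_cases_nat)
    case 1
    then show ?thesis using A(1)[of i] A(1)[of "Suc i"] assms(3) unfolding mesh_less_def by simp
  next
    case (2 j)
    then show ?thesis using A(2)[of j] A(2)[of "Suc j"] assms(4) unfolding mesh_less_def by simp
  qed
  then show ?thesis using e1 e2 unfolding mesh_less_def by (simp add: nth_append)
qed

lemma RS_sum_append:
  assumes t1: "tagged_interval_partition a u xs1 ts1" and t2: "tagged_interval_partition u v xs2 ts2"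
  shows "RS_sum f g (butlast xs1 @ xs2) (ts1 @ ts2) = RS_sum f g xs1 ts1 + RS_sum f g xs2 ts2"
proof -
  have ip1: "interval_partition a u xs1" and len1: "length ts1 = length xs1 - 1"
    using t1 unfolding tagged_interval_partition_def by auto
  have ip2: "interval_partition u v xs2"
    using t2 unfolding tagged_interval_partition_def by auto
  note A = nth_butlast_append_partition[OF ip1 ip2]
  note e1 = interval_partition_endpoints[OF ip1] and e2 = interval_partition_endpoints[OF ip2]
  have len: "length (butlast xs1 @ xs2) - 1 = (length xs1 - 1) + (length xs2 - 1)"
    using e1 e2 by simp
  show ?thesis
    unfolding RS_sum_def len
  proof (rule sum_lessThan_add_split)
    fix i assume "i < length xs1 - 1"
    then show "f ((ts1 @ ts2) ! i) * (g ((butlast xs1 @ xs2) ! Suc i) - g ((butlast xs1 @ xs2) ! i))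
        = f (ts1 ! i) * (g (xs1 ! Suc i) - g (xs1 ! i))"
      using A(1)[of i] A(1)[of "Suc i"] len1 by (simp add: nth_append)
  next
    fix j
    show "f ((ts1 @ ts2) ! (length xs1 - 1 + j)) * (g ((butlast xs1 @ xs2) ! Suc (length xs1 - 1 + j))
          - g ((butlast xs1 @ xs2) ! (length xs1 - 1 + j)))
        = f (ts2 ! j) * (g (xs2 ! Suc j) - g (xs2 ! j))"
      using A(2)[of j] A(2)[of "Suc j"] len1 by (simp add: nth_append)
  qed
qed

lemma has_RS_integral_additive:
  assumes "a \<le> u" "u \<le> v"
    and I1: "has_RS_integral f g a u I1" and I2: "has_RS_integral f g u v I2"
    and I: "has_RS_integral f g a v I"
  shows "I = I1 + I2"
proof (rule ccontr)
  assume "I \<noteq> I1 + I2"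
  define e where "e = \<bar>I - (I1 + I2)\<bar> / 3"
  have e: "e > 0" using \<open>I \<noteq> I1 + I2\<close> by (simp add: e_def)
  obtain d1 where d1: "d1 > 0" "\<And>xs ts. tagged_interval_partition a u xs ts \<and> mesh_less xs d1 \<Longrightarrow>
         \<bar>RS_sum f g xs ts - I1\<bar> < e"
    using I1 e unfolding has_RS_integral_def by meson
  obtain d2 where d2: "d2 > 0" "\<And>xs ts. tagged_interval_partition u v xs ts \<and> mesh_less xs d2 \<Longrightarrow>
         \<bar>RS_sum f g xs ts - I2\<bar> < e"
    using I2 e unfolding has_RS_integral_def by meson
  obtain d3 where d3: "d3 > 0" "\<And>xs ts. tagged_interval_partition a v xs ts \<and> mesh_less xs d3 \<Longrightarrow>
         \<bar>RS_sum f g xs ts - I\<bar> < e"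
    using I e unfolding has_RS_integral_def by meson
  define d where "d = min d1 (min d2 d3)"
  have d: "d > 0" using d1 d2 d3 by (simp add: d_def)
  obtain xs1 where xs1: "interval_partition a u xs1" "mesh_less xs1 d"
    using ex_fine_interval_partition[OF assms(1) d] .
  obtain xs2 where xs2: "interval_partition u v xs2" "mesh_less xs2 d"
    using ex_fine_interval_partition[OF assms(2) d] .
  note t1 = tagged_interval_partition_left_tags[OF xs1(1)]
  note t2 = tagged_interval_partition_left_tags[OF xs2(1)]
  have "\<bar>RS_sum f g xs1 (butlast xs1) - I1\<bar> < e" "\<bar>RS_sum f g xs2 (butlast xs2) - I2\<bar> < e"
    using d1(2) d2(2) t1 t2 mesh_less_mono[OF xs1(2)] mesh_less_mono[OF xs2(2)] d_def by auto
  moreover have "\<bar>RS_sum f g (butlast xs1 @ xs2) (butlast xs1 @ butlast xs2) - I\<bar> < e"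
    using d3(2) tagged_interval_partition_append[OF t1 t2]
      mesh_less_mono[OF mesh_less_append[OF xs1(1) xs2(1) xs1(2) xs2(2)]] d_def by auto
  ultimately have "\<bar>I - (I1 + I2)\<bar> < 3 * e"
    using RS_sum_append[OF t1 t2, of f g] by (simp only: abs_less_iff) linarith
  then show False unfolding e_def by simp
qed

section \<open>Existence and continuity of Riemann--Stieltjes integrals\<close>

definition heaviside :: "real \<Rightarrow> real \<Rightarrow> real" where
  "heaviside y u = (if y \<le> u then 1 else 0)"

lemma RS_sum_heaviside:
  assumes t: "tagged_interval_partition a b xs ts" and m: "mesh_less xs \<delta>" and "\<delta> > 0"
    and y: "a \<le> y" "y \<le> b"
  obtains p where "p < length xs" "\<bar>xs ! p - y\<bar> < \<delta>" "RS_sum (heaviside y) g xs ts = g b - g (xs ! p)"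
proof -
  have ip: "interval_partition a b xs" and len: "length ts = length xs - 1"
    and tg: "\<And>i. i < length ts \<Longrightarrow> xs ! i \<le> ts ! i \<and> ts ! i \<le> xs ! Suc i"
    using t unfolding tagged_interval_partition_def by auto
  define n where "n = length ts"
  note ends = interval_partition_endpoints[OF ip, folded len, folded n_def]
  have ms: "\<And>i. i < n \<Longrightarrow> xs ! Suc i - xs ! i < \<delta>" using m len unfolding mesh_less_def n_def by auto
  define p where "p = (LEAST i. i = n \<or> y \<le> ts ! i)"
  have pn: "p \<le> n" unfolding p_def by (rule Least_le) simp
  have below: "ts ! i < y" if "i < p" for i
    using not_less_Least[OF that[unfolded p_def]] by auto
  have above: "y \<le> ts ! i" if "p \<le> i" "i < n" for i
  proof -
    have "p = n \<or> y \<le> ts ! p" unfolding p_def by (rule LeastI[of _ n]) simp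
    then have "y \<le> ts ! p" using that by auto
    also have "\<dots> \<le> ts ! i" using tagged_interval_partition_tag_mono[OF t that(1)] that(2) n_def by auto
    finally show ?thesis .
  qed
  have "RS_sum (heaviside y) g xs ts = (\<Sum>i<n. if y \<le> ts ! i then g (xs ! Suc i) - g (xs ! i) else 0)"
    unfolding RS_sum_def heaviside_def n_def len by (intro sum.cong) auto
  also have "\<dots> = (\<Sum>i<p. if y \<le> ts ! i then g (xs ! Suc i) - g (xs ! i) else 0)
        + (\<Sum>i=p..<n. if y \<le> ts ! i then g (xs ! Suc i) - g (xs ! i) else 0)"
    using pn unfolding lessThan_atLeast0 by (simp add: sum.atLeastLessThan_concat)
  also have "(\<Sum>i<p. if y \<le> ts ! i then g (xs ! Suc i) - g (xs ! i) else 0) = 0"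
    by (intro sum.neutral) (auto dest!: below)
  also have "(\<Sum>i=p..<n. if y \<le> ts ! i then g (xs ! Suc i) - g (xs ! i) else 0)
       = (\<Sum>i=p..<n. g (xs ! Suc i) - g (xs ! i))"
    using above by (intro sum.cong) auto
  also have "\<dots> = g b - g (xs ! p)" using sum_Suc_diff'[OF pn, of "\<lambda>i. g (xs ! i)"] ends by simp
  finally have sum: "RS_sum (heaviside y) g xs ts = g b - g (xs ! p)" by simp
  have "xs ! p < y + \<delta>"
  proof (cases "p = 0")
    case True then show ?thesis using ends y \<open>\<delta> > 0\<close> by simp
  next
    case False
    then have "ts ! (p - 1) < y" "xs ! (p - 1) \<le> ts ! (p - 1)" "xs ! Suc (p - 1) - xs ! (p - 1) < \<delta>"
      using below tg[of "p - 1"] ms[of "p - 1"] pn n_def by auto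
    then show ?thesis using False by simp
  qed
  moreover have "y - \<delta> < xs ! p"
  proof (cases "p = n")
    case True then show ?thesis using ends y \<open>\<delta> > 0\<close> by simp
  next
    case False
    then have "y \<le> ts ! p" "ts ! p \<le> xs ! Suc p" "xs ! Suc p - xs ! p < \<delta>"
      using above[of p] tg[of p] ms[of p] pn n_def by auto
    then show ?thesis by simp
  qed
  ultimately show ?thesis using that[of p] pn sum ends by (simp add: abs_less_iff)
qed

lemma RS_sum_step_function:
  assumes "interval_partition a b xs"
  shows "RS_sum (\<lambda>u. c + (\<Sum>k<m. d k * heaviside (y k) u)) g xs ts
    = c * (g b - g a) + (\<Sum>k<m. d k * RS_sum (heaviside (y k)) g xs ts)"
proof -
  have "RS_sum (\<lambda>u. c + (\<Sum>k<m. d k * heaviside (y k) u)) g xs ts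
      = RS_sum (\<lambda>_. c) g xs ts + (\<Sum>k<m. d k * RS_sum (heaviside (y k)) g xs ts)"
    unfolding RS_sum_def
    by (simp add: distrib_right sum.distrib sum_distrib_left sum_distrib_right mult.assoc
        sum.swap[of _ "{..<m}"])
  then show ?thesis using RS_sum_const[OF assms] by simp
qed

lemma uniform_step_approximation:
  assumes "a \<le> b" "continuous_on {a..b} f" "\<epsilon> > 0"
  obtains m :: nat and c d y where "\<forall>k<m. a \<le> y k \<and> y k \<le> b"
    "\<forall>u\<in>{a..b}. \<bar>f u - (c + (\<Sum>k<m. d k * heaviside (y k) u))\<bar> \<le> \<epsilon>"
proof (cases "a = b")
  case True
  show ?thesis by (rule that[where m = 0 and c = "f a"]) (use True assms(3) in auto)
next
  case False
  obtain \<delta> where \<delta>: "\<delta> > 0" "\<And>x x'. x \<in> {a..b} \<Longrightarrow> x' \<in> {a..b} \<Longrightarrow> dist x' x < \<delta> \<Longrightarrow> dist (f x') (f x) < \<epsilon>"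
    using compact_uniformly_continuous[OF assms(2) compact_Icc] assms(3)
    unfolding uniformly_continuous_on_def by metis
  obtain n :: nat where n: "n > 0" "(b - a) / n < \<delta>" using ex_nat_divide_less[OF \<delta>(1)] .
  define h where "h = (b - a) / n"
  have h: "h > 0" "h < \<delta>" "real n * h = b - a" using assms(1) False n by (auto simp: h_def)
  define F where "F k = f (a + real k * h)" for k
  define d where "d k = F (Suc k) - F k" for k
  define y where "y k = a + real (Suc k) * h" for k
  have y: "\<forall>k<n. a \<le> y k \<and> y k \<le> b"
  proof (intro allI impI)
    fix k assume "k < n"
    then have "real (Suc k) * h \<le> real n * h" using h by (intro mult_right_mono) auto
    then show "a \<le> y k \<and> y k \<le> b" using h unfolding y_def by simp
  qed
  have "\<bar>f u - (f a + (\<Sum>k<n. d k * heaviside (y k) u))\<bar> \<le> \<epsilon>" if u: "u \<in> {a..b}" for u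
  proof -
    define z where "z = (u - a) / h"
    define j where "j = nat \<lfloor>z\<rfloor>"
    have "0 \<le> z" "z \<le> real n" using u h by (auto simp: z_def divide_le_eq mult.commute)
    then have jz: "real j \<le> z" "z < real j + 1" and "j \<le> n" unfolding j_def by linarith+
    have y_le_iff: "y k \<le> u \<longleftrightarrow> k < j" for k
    proof -
      have "y k \<le> u \<longleftrightarrow> real (Suc k) \<le> z"
        using h unfolding y_def z_def by (simp add: le_divide_eq algebra_simps)
      also have "\<dots> \<longleftrightarrow> Suc k \<le> j"
        using jz le_nat_floor[of "Suc k" z] unfolding j_def by (auto simp del: of_nat_Suc)
      finally show ?thesis using Suc_le_eq by blast
    qed
    have "(\<Sum>k<n. d k * heaviside (y k) u) = (\<Sum>k\<in>{..<n} \<inter> {..<j}. d k)"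
      unfolding sum.inter_restrict[OF finite_lessThan] heaviside_def y_le_iff by (intro sum.cong) auto
    also have "\<dots> = (\<Sum>k<j. d k)" using \<open>j \<le> n\<close> by (simp add: Int_absorb1)
    also have "\<dots> = F j - F 0" unfolding d_def by (rule sum_lessThan_telescope)
    finally have step: "f a + (\<Sum>k<n. d k * heaviside (y k) u) = f (a + real j * h)"
      unfolding F_def by simp
    have "a + real j * h \<le> u" "u < a + real j * h + h"
      using jz h unfolding z_def by (simp_all add: le_divide_eq divide_less_eq algebra_simps)
    then have "dist (f u) (f (a + real j * h)) < \<epsilon>"
      using \<delta>(2) u h by (auto simp: dist_real_def)
    then show ?thesis using step by (simp add: dist_real_def)
  qed
  then show ?thesis using that[where m = n and c = "f a" and d = d and y = y] y by blast
qed

lemma variation_bound_nonneg: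
  assumes "a \<le> b" "\<forall>xs. interval_partition a b xs \<longrightarrow> variation_sum g xs \<le> B"
  shows "0 \<le> B"
proof -
  have "interval_partition a b [a, b]" using assms(1) unfolding interval_partition_def by simp
  then show ?thesis using assms(2) variation_sum_nonneg[of g "[a, b]"] by force
qed

lemma RS_sums_cluster:
  fixes f g :: "real \<Rightarrow> real"
  assumes ab: "a \<le> b" and cf: "continuous_on {a..b} f" and cg: "continuous_on {a..b} g"
    and vb: "\<forall>xs. interval_partition a b xs \<longrightarrow> variation_sum g xs \<le> B" and "\<epsilon> > 0"
  shows "\<exists>\<delta>>0. \<exists>T. \<forall>xs ts. tagged_interval_partition a b xs ts \<and> mesh_less xs \<delta> \<longrightarrow>
            \<bar>RS_sum f g xs ts - T\<bar> < \<epsilon>"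
proof -
  have "0 \<le> B" by (rule variation_bound_nonneg[OF ab vb])
  define \<epsilon>1 where "\<epsilon>1 = \<epsilon> / (2 * (B + 1))"
  have "\<epsilon>1 > 0" "\<epsilon>1 * B < \<epsilon> / 2"
    using \<open>\<epsilon> > 0\<close> \<open>0 \<le> B\<close> by (auto simp: \<epsilon>1_def field_simps)
  obtain m :: nat and c d y where y: "\<forall>k<m. a \<le> y k \<and> y k \<le> b"
    and step: "\<forall>u\<in>{a..b}. \<bar>f u - (c + (\<Sum>k<m. d k * heaviside (y k) u))\<bar> \<le> \<epsilon>1"
    using uniform_step_approximation[OF ab cf \<open>\<epsilon>1 > 0\<close>] by metis
  define D where "D = (\<Sum>k<m. \<bar>d k\<bar>)"
  have "0 \<le> D" unfolding D_def by (simp add: sum_nonneg)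
  define \<eta> where "\<eta> = \<epsilon> / (2 * (D + 1))"
  have "\<eta> > 0" "D * \<eta> < \<epsilon> / 2"
    using \<open>\<epsilon> > 0\<close> \<open>0 \<le> D\<close> by (auto simp: \<eta>_def field_simps)
  obtain \<delta> where \<delta>: "\<delta> > 0" "\<And>x x'. x \<in> {a..b} \<Longrightarrow> x' \<in> {a..b} \<Longrightarrow> dist x' x < \<delta> \<Longrightarrow> dist (g x') (g x) < \<eta>"
    using compact_uniformly_continuous[OF cg compact_Icc] \<open>\<eta> > 0\<close>
    unfolding uniformly_continuous_on_def by metis
  \<comment> \<open>limit of the sums of the step function: the jump d k at y k contributes d k (g b - g (y k))\<close>
  define T where "T = c * (g b - g a) + (\<Sum>k<m. d k * (g b - g (y k)))"
  have "\<bar>RS_sum f g xs ts - T\<bar> < \<epsilon>"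
    if t: "tagged_interval_partition a b xs ts" and ms: "mesh_less xs \<delta>" for xs ts
  proof -
    have ip: "interval_partition a b xs" using t unfolding tagged_interval_partition_def by auto
    define H where "H k = RS_sum (heaviside (y k)) g xs ts" for k
    have "\<bar>RS_sum f g xs ts - RS_sum (\<lambda>u. c + (\<Sum>k<m. d k * heaviside (y k) u)) g xs ts\<bar> \<le> \<epsilon>1 * B"
      using RS_sum_diff_le[OF t] \<open>\<epsilon>1 > 0\<close> step tagged_interval_partition_tag_bounds[OF t] vb ip
      by (simp add: less_imp_le)
    moreover have "\<bar>H k - (g b - g (y k))\<bar> < \<eta>" if "k < m" for k
    proof -
      obtain p where p: "p < length xs" "\<bar>xs ! p - y k\<bar> < \<delta>" "H k = g b - g (xs ! p)"
        using RS_sum_heaviside[OF t ms \<delta>(1), of "y k" g] y \<open>k < m\<close> unfolding H_def by auto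
      have "xs ! p \<in> {a..b}" "y k \<in> {a..b}"
        using interval_partition_nth_bounds[OF ip p(1)] y \<open>k < m\<close> by auto
      then show ?thesis using \<delta>(2) p(2,3) by (simp add: dist_real_def abs_minus_commute)
    qed
    then have "\<bar>(\<Sum>k<m. d k * H k) - (\<Sum>k<m. d k * (g b - g (y k)))\<bar> \<le> D * \<eta>"
      unfolding D_def sum_subtractf[symmetric] right_diff_distrib[symmetric] sum_distrib_right
      by (intro order_trans[OF sum_abs] sum_mono) (simp add: abs_mult mult_left_mono less_imp_le)
    ultimately show ?thesis
      using RS_sum_step_function[OF ip, where c = c and m = m and d = d and y = y and g = g and ts = ts]
        \<open>\<epsilon>1 * B < \<epsilon> / 2\<close> \<open>D * \<eta> < \<epsilon> / 2\<close>
      unfolding T_def H_def by (simp only: abs_le_iff abs_less_iff) linarith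
  qed
  then show ?thesis using \<delta>(1) by blast
qed

lemma ex_has_RS_integral_if_sums_cluster:
  assumes ab: "a \<le> b"
    and cluster: "\<And>\<epsilon>. \<epsilon> > 0 \<Longrightarrow> \<exists>\<delta>>0. \<exists>T. \<forall>xs ts. tagged_interval_partition a b xs ts \<and> mesh_less xs \<delta> \<longrightarrow>
            \<bar>RS_sum f g xs ts - T\<bar> < \<epsilon>"
  shows "\<exists>I. has_RS_integral f g a b I"
proof -
  define P where "P n = uniform_partition a b (Suc n)" for n
  define s where "s n = RS_sum f g (P n) (butlast (P n))" for n
  have tagged: "tagged_interval_partition a b (P n) (butlast (P n))" for n
    unfolding P_def
    by (intro tagged_interval_partition_left_tags interval_partition_uniform_partition ab) simp
  have fine: "\<exists>N. \<forall>n\<ge>N. mesh_less (P n) \<delta>" if \<delta>: "\<delta> > 0" for \<delta>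
  proof -
    obtain N :: nat where N: "N > 0" "(b - a) / N < \<delta>" using ex_nat_divide_less[OF \<delta>] .
    have "(b - a) / real (Suc n) < \<delta>" if "n \<ge> N" for n
      using N ab that order.strict_trans1[OF divide_left_mono[of N "real (Suc n)" "b - a"]] by auto
    then show ?thesis unfolding P_def using mesh_less_uniform_partition by blast
  qed
  have eventually_near: "\<exists>N. \<forall>n\<ge>N. \<bar>s n - T\<bar> < \<epsilon>"
    if "\<forall>xs ts. tagged_interval_partition a b xs ts \<and> mesh_less xs \<delta> \<longrightarrow> \<bar>RS_sum f g xs ts - T\<bar> < \<epsilon>"
      "\<delta> > 0" for \<delta> T \<epsilon>
    using fine[OF that(2)] that(1) tagged unfolding s_def by blast
  have "Cauchy s"
  proof (rule CauchyI)
    fix e :: real assume "e > 0"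
    then obtain \<delta> T where "\<delta> > 0" "\<forall>xs ts. tagged_interval_partition a b xs ts \<and> mesh_less xs \<delta> \<longrightarrow>
            \<bar>RS_sum f g xs ts - T\<bar> < e / 2"
      using cluster[of "e / 2"] by auto
    then obtain N where N: "\<forall>n\<ge>N. \<bar>s n - T\<bar> < e / 2" using eventually_near by blast
    have "\<forall>m\<ge>N. \<forall>n\<ge>N. norm (s m - s n) < e"
    proof (intro allI impI)
      fix m n assume "m \<ge> N" "n \<ge> N"
      then have "\<bar>s m - T\<bar> < e / 2" "\<bar>s n - T\<bar> < e / 2" using N by auto
      then show "norm (s m - s n) < e" by (simp add: abs_if split: if_splits)
    qed
    then show "\<exists>M. \<forall>m\<ge>M. \<forall>n\<ge>M. norm (s m - s n) < e" by blast
  qed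
  then obtain I where I: "s \<longlonglongrightarrow> I" using Cauchy_convergent_iff convergent_def by blast
  have "has_RS_integral f g a b I"
    unfolding has_RS_integral_def
  proof (intro allI impI)
    fix e :: real assume "e > 0"
    then obtain \<delta> T where \<delta>: "\<delta> > 0" "\<forall>xs ts. tagged_interval_partition a b xs ts \<and> mesh_less xs \<delta> \<longrightarrow>
            \<bar>RS_sum f g xs ts - T\<bar> < e / 2"
      using cluster[of "e / 2"] by auto
    then obtain N where "\<forall>n\<ge>N. \<bar>s n - T\<bar> \<le> e / 2" using eventually_near less_imp_le by meson
    moreover have "(\<lambda>n. \<bar>s n - T\<bar>) \<longlonglongrightarrow> \<bar>I - T\<bar>" by (intro tendsto_intros I)
    ultimately have "\<bar>I - T\<bar> \<le> e / 2" using Lim_bounded by blast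
    then show "\<exists>d>0. \<forall>xs ts. tagged_interval_partition a b xs ts \<and> mesh_less xs d \<longrightarrow> \<bar>RS_sum f g xs ts - I\<bar> < e"
    proof (intro exI[of _ \<delta>] conjI allI impI)
      fix xs ts assume "tagged_interval_partition a b xs ts \<and> mesh_less xs \<delta>"
      then have "\<bar>RS_sum f g xs ts - T\<bar> < e / 2" using \<delta>(2) by blast
      then show "\<bar>RS_sum f g xs ts - I\<bar> < e" using \<open>\<bar>I - T\<bar> \<le> e / 2\<close> by linarith
    qed (rule \<delta>(1))
  qed
  then show ?thesis by blast
qed

lemma has_RS_integral_exists:
  fixes f g :: "real \<Rightarrow> real"
  assumes "a \<le> b" "continuous_on {a..b} f" "continuous_on {a..b} g"
    "\<forall>xs. interval_partition a b xs \<longrightarrow> variation_sum g xs \<le> B"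
  shows "\<exists>I. has_RS_integral f g a b I"
  using ex_has_RS_integral_if_sums_cluster[OF assms(1) RS_sums_cluster[OF assms]] .

context
  fixes f g :: "real \<Rightarrow> real" and a b B :: real
  assumes cf: "continuous_on {a..b} f" and cg: "continuous_on {a..b} g"
    and VB: "\<And>u v xs. a \<le> u \<Longrightarrow> v \<le> b \<Longrightarrow> interval_partition u v xs \<Longrightarrow> variation_sum g xs \<le> B"
begin

lemma has_RS_integral_subinterval:
  assumes "a \<le> u" "u \<le> v" "v \<le> b"
  shows "has_RS_integral f g u v (RS_integral f g u v)"
proof -
  have "{u..v} \<subseteq> {a..b}" using assms by auto
  then obtain I where "has_RS_integral f g u v I"
    using has_RS_integral_exists[OF assms(2) continuous_on_subset[OF cf] continuous_on_subset[OF cg],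
        of B] VB assms
    by blast
  then show ?thesis using RS_integral_eqI[OF assms(2)] by simp
qed

lemma RS_integral_uniformly_small:
  assumes "e > 0"
  obtains d where "d > 0"
    "\<And>u v. a \<le> u \<Longrightarrow> u \<le> v \<Longrightarrow> v \<le> b \<Longrightarrow> v - u < d \<Longrightarrow> \<bar>RS_integral f g u v\<bar> < e"
proof (cases "a \<le> b")
  case False
  then show ?thesis using that[of 1] by auto
next
  case True
  have "0 \<le> B" using variation_bound_nonneg[OF True] VB by blast
  obtain M where M: "\<And>x. x \<in> {a..b} \<Longrightarrow> \<bar>f x\<bar> \<le> M"
    using compact_imp_bounded[OF compact_continuous_image[OF cf compact_Icc]]
    unfolding bounded_iff by (auto simp del: atLeastAtMost_iff)
  have "0 \<le> M" using M[of a] True by force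
  define \<eta> where "\<eta> = e / (2 * (B + 1))"
  have "\<eta> > 0" "\<eta> * B < e / 2" using \<open>e > 0\<close> \<open>0 \<le> B\<close> by (auto simp: \<eta>_def field_simps)
  define \<theta> where "\<theta> = e / (2 * (M + 1))"
  have "\<theta> > 0" "M * \<theta> < e / 2" using \<open>e > 0\<close> \<open>0 \<le> M\<close> by (auto simp: \<theta>_def field_simps)
  obtain d1 where d1: "d1 > 0" "\<And>x x'. x \<in> {a..b} \<Longrightarrow> x' \<in> {a..b} \<Longrightarrow> dist x' x < d1 \<Longrightarrow> dist (f x') (f x) < \<eta>"
    using compact_uniformly_continuous[OF cf compact_Icc] \<open>\<eta> > 0\<close>
    unfolding uniformly_continuous_on_def by metis
  obtain d2 where d2: "d2 > 0" "\<And>x x'. x \<in> {a..b} \<Longrightarrow> x' \<in> {a..b} \<Longrightarrow> dist x' x < d2 \<Longrightarrow> dist (g x') (g x) < \<theta>"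
    using compact_uniformly_continuous[OF cg compact_Icc] \<open>\<theta> > 0\<close>
    unfolding uniformly_continuous_on_def by metis
  have "\<bar>RS_integral f g u v\<bar> < e"
    if uv: "a \<le> u" "u \<le> v" "v \<le> b" "v - u < min d1 d2" for u v
  proof -
    have "\<forall>y\<in>{u..v}. \<bar>f y - f u\<bar> \<le> \<eta>"
    proof
      fix y assume "y \<in> {u..v}"
      then have "dist (f y) (f u) < \<eta>" using d1(2)[of u y] uv by (simp add: dist_real_def)
      then show "\<bar>f y - f u\<bar> \<le> \<eta>" by (simp add: dist_real_def)
    qed
    then have "\<bar>RS_integral f g u v - f u * (g v - g u)\<bar> \<le> \<eta> * B"
      using has_RS_integral_near_const[OF uv(2) has_RS_integral_subinterval[OF uv(1-3)]] \<open>\<eta> > 0\<close> VB uv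
      by (simp add: less_imp_le)
    moreover have "\<bar>g v - g u\<bar> \<le> \<theta>"
      using d2(2)[of u v] uv by (simp add: dist_real_def)
    then have "\<bar>f u * (g v - g u)\<bar> \<le> M * \<theta>"
      unfolding abs_mult using M[of u] uv \<open>0 \<le> M\<close> by (intro mult_mono) auto
    ultimately show ?thesis using \<open>\<eta> * B < e / 2\<close> \<open>M * \<theta> < e / 2\<close> by linarith
  qed
  then show ?thesis using that[of "min d1 d2"] d1(1) d2(1) by simp
qed

lemma continuous_on_RS_integral_upper:
  shows "continuous_on {a..b} (\<lambda>v. RS_integral f g a v)"
  unfolding continuous_on_iff
proof (intro ballI allI impI)
  fix x e :: real assume x: "x \<in> {a..b}" and "e > 0"
  obtain d where d: "d > 0"
    "\<And>u v. a \<le> u \<Longrightarrow> u \<le> v \<Longrightarrow> v \<le> b \<Longrightarrow> v - u < d \<Longrightarrow> \<bar>RS_integral f g u v\<bar> < e"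
    using RS_integral_uniformly_small[OF \<open>e > 0\<close>] by blast
  have near: "\<bar>RS_integral f g a v - RS_integral f g a u\<bar> < e"
    if "a \<le> u" "u \<le> v" "v \<le> b" "v - u < d" for u v
    using has_RS_integral_additive[OF that(1,2) has_RS_integral_subinterval[of a u]
        has_RS_integral_subinterval[of u v] has_RS_integral_subinterval[of a v]] d(2) that
    by simp
  have "dist (RS_integral f g a x') (RS_integral f g a x) < e" if "x' \<in> {a..b}" "dist x' x < d" for x'
    using near[of x x'] near[of x' x] x that
    by (cases "x \<le> x'") (auto simp: dist_real_def abs_minus_commute)
  then show "\<exists>d>0. \<forall>x'\<in>{a..b}. dist x' x < d \<longrightarrow> dist (RS_integral f g a x') (RS_integral f g a x) < e"
    using d(1) by blast
qed

end

section \<open>Factorial decay of the signature\<close>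

lemma power_div_fact_increment_le:
  fixes y z :: real
  assumes "0 \<le> y" "y \<le> z"
  shows "y ^ k / fact k * (z - y) \<le> (z ^ Suc k - y ^ Suc k) / fact (Suc k)"
proof -
  have "(\<Sum>i<Suc k. y ^ k) \<le> (\<Sum>i<Suc k. y ^ (Suc k - Suc i) * z ^ i)"
  proof (rule sum_mono)
    fix i assume "i \<in> {..<Suc k}"
    then have "y ^ k = y ^ (Suc k - Suc i) * y ^ i" by (simp add: power_add[symmetric])
    also have "\<dots> \<le> y ^ (Suc k - Suc i) * z ^ i"
      using assms by (intro mult_left_mono power_mono) auto
    finally show "y ^ k \<le> y ^ (Suc k - Suc i) * z ^ i" .
  qed
  then have "(z - y) * (real (Suc k) * y ^ k) \<le> (z - y) * (\<Sum>i<Suc k. y ^ (Suc k - Suc i) * z ^ i)"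
    using assms by (intro mult_left_mono) auto
  also have "\<dots> = z ^ Suc k - y ^ Suc k" by (rule power_diff_sumr2[symmetric])
  finally have "real (Suc k) * y ^ k * (z - y) \<le> z ^ Suc k - y ^ Suc k" by (simp add: algebra_simps)
  then have "real (Suc k) * y ^ k * (z - y) / fact (Suc k) \<le> (z ^ Suc k - y ^ Suc k) / fact (Suc k)"
    by (intro divide_right_mono) auto
  then show ?thesis by (simp add: fact_Suc del: of_nat_Suc)
qed

lemma sum_power_div_fact_increments_le:
  fixes X :: "nat \<Rightarrow> real"
  assumes "\<And>i. i < n \<Longrightarrow> 0 \<le> X i \<and> X i \<le> X (Suc i)"
  shows "(\<Sum>i<n. X i ^ k / fact k * (X (Suc i) - X i)) \<le> (X n ^ Suc k - X 0 ^ Suc k) / fact (Suc k)"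
proof -
  have "(\<Sum>i<n. X i ^ k / fact k * (X (Suc i) - X i))
      \<le> (\<Sum>i<n. (X (Suc i) ^ Suc k - X i ^ Suc k) / fact (Suc k))"
    using assms by (intro sum_mono power_div_fact_increment_le) auto
  also have "\<dots> = (X n ^ Suc k - X 0 ^ Suc k) / fact (Suc k)"
    unfolding sum_divide_distrib[symmetric] sum_lessThan_telescope[of "\<lambda>i. X i ^ Suc k"] ..
  finally show ?thesis .
qed

lemma L2_set_sum_le:
  assumes "finite I"
  shows "L2_set (\<lambda>p. \<Sum>i\<in>I. F i p) W \<le> (\<Sum>i\<in>I. L2_set (F i) W)"
  using assms
proof (induction I rule: finite_induct)
  case empty
  then show ?case by (simp add: L2_set_0')
next
  case (insert j I)
  have "L2_set (\<lambda>p. F j p + (\<Sum>i\<in>I. F i p)) W \<le> L2_set (F j) W + L2_set (\<lambda>p. \<Sum>i\<in>I. F i p) W"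
    by (rule L2_set_triangle_ineq)
  then show ?case using insert by simp
qed

lemma L2_set_times_inner_Basis:
  fixes v :: "'v::euclidean_space"
  assumes "finite A"
  shows "L2_set (\<lambda>p. f (fst p) * (v \<bullet> snd p)) (A \<times> Basis) = L2_set f A * norm v"
proof -
  have nv: "(norm v)\<^sup>2 = (\<Sum>e\<in>Basis. (v \<bullet> e)\<^sup>2)"
    unfolding power2_norm_eq_inner by (subst euclidean_inner) (simp add: power2_eq_square)
  have "(\<Sum>p\<in>A \<times> Basis. (f (fst p) * (v \<bullet> snd p))\<^sup>2) = (\<Sum>w\<in>A. \<Sum>e\<in>Basis. (f w)\<^sup>2 * (v \<bullet> e)\<^sup>2)"
    by (subst sum.cartesian_product) (simp add: power_mult_distrib case_prod_beta)
  also have "\<dots> = (\<Sum>w\<in>A. (f w)\<^sup>2) * (norm v)\<^sup>2"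
    unfolding nv sum_distrib_right by (simp add: sum_distrib_left)
  finally
  show ?thesis unfolding L2_set_def by (simp add: real_sqrt_mult)
qed

lemma L2_set_RS_integral_le:
  assumes "finite W" "a \<le> u"
    and J: "\<And>p. p \<in> W \<Longrightarrow> has_RS_integral (F p) (G p) a u (J p)"
    and C: "\<And>xs. interval_partition a u xs \<Longrightarrow> L2_set (\<lambda>p. RS_sum (F p) (G p) xs (butlast xs)) W \<le> C"
  shows "L2_set J W \<le> C"
proof (rule field_le_epsilon)
  fix e :: real assume "e > 0"
  define \<epsilon> where "\<epsilon> = e / (real (card W) + 1)"
  have "\<epsilon> > 0" "real (card W) * \<epsilon> \<le> e" using \<open>e > 0\<close> by (auto simp: \<epsilon>_def field_simps)
  have "\<forall>p\<in>W. \<exists>d>0. \<forall>xs ts. tagged_interval_partition a u xs ts \<and> mesh_less xs d \<longrightarrow>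
      \<bar>RS_sum (F p) (G p) xs ts - J p\<bar> < \<epsilon>"
    using J \<open>\<epsilon> > 0\<close> unfolding has_RS_integral_def by blast
  then obtain D where D: "\<And>p. p \<in> W \<Longrightarrow> D p > 0"
    "\<And>p xs ts. p \<in> W \<Longrightarrow> tagged_interval_partition a u xs ts \<Longrightarrow> mesh_less xs (D p) \<Longrightarrow>
      \<bar>RS_sum (F p) (G p) xs ts - J p\<bar> < \<epsilon>"
    by metis
  define \<delta> where "\<delta> = Min (insert 1 (D ` W))"
  have "\<delta> > 0" unfolding \<delta>_def using D(1) \<open>finite W\<close> by (subst Min_gr_iff) auto
  obtain xs where xs: "interval_partition a u xs" "mesh_less xs \<delta>"
    using ex_fine_interval_partition[OF \<open>a \<le> u\<close> \<open>\<delta> > 0\<close>] .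
  define S where "S p = RS_sum (F p) (G p) xs (butlast xs)" for p
  have "mesh_less xs (D p)" if "p \<in> W" for p
    using mesh_less_mono[OF xs(2)] \<open>finite W\<close> that unfolding \<delta>_def by simp
  then have err: "\<bar>J p - S p\<bar> \<le> \<epsilon>" if "p \<in> W" for p
    using D(2)[OF that tagged_interval_partition_left_tags[OF xs(1)]] that
    unfolding S_def by (simp add: abs_minus_commute)
  have "L2_set J W \<le> L2_set S W + L2_set (\<lambda>p. J p - S p) W"
    using L2_set_triangle_ineq[of S "\<lambda>p. J p - S p" W] by simp
  also have "L2_set (\<lambda>p. J p - S p) W \<le> real (card W) * \<epsilon>"
    using order_trans[OF L2_set_le_sum_abs sum_bounded_above[of W "\<lambda>p. \<bar>J p - S p\<bar>" \<epsilon>]] err by simp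
  finally show "L2_set J W \<le> C + e"
    using C[OF xs(1)] \<open>real (card W) * \<epsilon> \<le> e\<close> unfolding S_def by linarith
qed

lemma finite_words: "finite (words k :: 'v::euclidean_space list set)"
proof -
  have "words k = {xs :: 'v list. set xs \<subseteq> Basis \<and> length xs = k}" unfolding words_def by auto
  then show ?thesis using finite_lists_length_eq[OF finite_Basis] by simp
qed

lemma words_0: "words 0 = {[]}"
  unfolding words_def by auto

lemma words_Suc: "words (Suc k) = (\<lambda>p. fst p @ [snd p]) ` (words k \<times> Basis)"
proof
  show "(\<lambda>p. fst p @ [snd p]) ` (words k \<times> Basis) \<subseteq> words (Suc k)" unfolding words_def by auto
  show "words (Suc k) \<subseteq> (\<lambda>p. fst p @ [snd p]) ` (words k \<times> Basis)"
  proof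
    fix w assume w: "w \<in> words (Suc k)"
    then have "w \<noteq> []" unfolding words_def by auto
    then have "w = fst (butlast w, last w) @ [snd (butlast w, last w)]" by simp
    moreover have "(butlast w, last w) \<in> words k \<times> Basis"
      using w \<open>w \<noteq> []\<close> unfolding words_def by (auto dest: in_set_butlastD)
    ultimately show "w \<in> (\<lambda>p. fst p @ [snd p]) ` (words k \<times> Basis)" by (rule image_eqI)
  qed
qed

lemma inj_on_snoc_words: "inj_on (\<lambda>p. fst p @ [snd p]) (words k \<times> Basis)"
  by (auto simp: inj_on_def)

definition sig_norm :: "(real \<Rightarrow> 'v::euclidean_space) \<Rightarrow> real \<Rightarrow> real \<Rightarrow> nat \<Rightarrow> real" where
  "sig_norm \<gamma> a u k = L2_set (signature_coord \<gamma> a u) (words k)"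

lemma abs_sig_inner_le: "\<bar>sig_inner k \<gamma> \<sigma> a s t\<bar> \<le> sig_norm \<gamma> a s k * sig_norm \<sigma> a t k"
proof -
  have "\<bar>sig_inner k \<gamma> \<sigma> a s t\<bar> \<le> (\<Sum>w\<in>words k. \<bar>signature_coord \<gamma> a s w\<bar> * \<bar>signature_coord \<sigma> a t w\<bar>)"
    unfolding sig_inner_def by (rule order_trans[OF sum_abs]) (simp add: abs_mult)
  also have "\<dots> \<le> sig_norm \<gamma> a s k * sig_norm \<sigma> a t k"
    unfolding sig_norm_def by (rule L2_set_mult_ineq)
  finally show ?thesis .
qed

context
  fixes \<gamma> :: "real \<Rightarrow> 'v::euclidean_space" and a b :: real
  assumes cont: "continuous_on {a..b} \<gamma>" and bv: "bounded_variation_on \<gamma> a b"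
begin

lemma variation_sum_inner_le_path_len:
  assumes "a \<le> u" "v \<le> b" "interval_partition u v xs"
  shows "variation_sum (\<lambda>u. \<gamma> u \<bullet> e) xs \<le> norm e * path_len \<gamma> a b"
  using variation_sum_inner_le[of \<gamma> e xs]
    mult_left_mono[OF variation_sum_le_path_len[OF bv assms] norm_ge_zero[of e]]
  by linarith

lemma continuous_on_iter_int: "continuous_on {a..b} (\<lambda>u. iter_int \<gamma> a u ws)"
proof (induction ws)
  case Nil
  then show ?case by simp
next
  case (Cons e ws)
  have "continuous_on {a..b} (\<lambda>u. \<gamma> u \<bullet> e)" by (intro continuous_on_inner cont continuous_on_const)
  then show ?case
    using continuous_on_RS_integral_upper[OF Cons.IH _ variation_sum_inner_le_path_len] by simp
qed

lemma has_RS_integral_iter_int: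
  assumes "a \<le> u" "u \<le> b"
  shows "has_RS_integral (\<lambda>v. iter_int \<gamma> a v ws) (\<lambda>v. \<gamma> v \<bullet> e) a u (iter_int \<gamma> a u (e # ws))"
  using has_RS_integral_subinterval[OF continuous_on_iter_int _ variation_sum_inner_le_path_len
      order_refl assms]
    continuous_on_inner[OF cont continuous_on_const] by simp

lemma sig_norm_RS_sum_le:
  assumes IH: "\<And>x. x \<in> {a..b} \<Longrightarrow> sig_norm \<gamma> a x k \<le> path_len \<gamma> a x ^ k / fact k"
    and "u \<le> b" and xs: "interval_partition a u xs"
  shows "L2_set (\<lambda>p. RS_sum (\<lambda>v. signature_coord \<gamma> a v (fst p)) (\<lambda>v. \<gamma> v \<bullet> snd p) xs (butlast xs))
           (words k \<times> Basis) \<le> path_len \<gamma> a u ^ Suc k / fact (Suc k)"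
proof -
  define n where "n = length xs - 1"
  define X where "X i = xs ! i" for i
  define L where "L x = path_len \<gamma> a x" for x
  define \<Delta> where "\<Delta> i = \<gamma> (X (Suc i)) - \<gamma> (X i)" for i
  note ends = interval_partition_endpoints[OF xs, folded n_def X_def]
  have X: "a \<le> X i" "X i \<le> b" "X i \<le> X (Suc i)" "X (Suc i) \<le> b" if "i < n" for i
    using interval_partition_nth_bounds[OF xs, of i] interval_partition_nth_bounds[OF xs, of "Suc i"]
      interval_partition_nth_mono[OF xs, of i "Suc i"] that ends \<open>u \<le> b\<close> unfolding X_def by auto
  have L: "L (X i) + norm (\<Delta> i) \<le> L (X (Suc i))" "0 \<le> L (X i)" if "i < n" for i
    using path_len_increment[OF bv X(1,3,4)[OF that]] path_len_nonneg[OF bv X(1,2)[OF that]]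
    unfolding L_def \<Delta>_def by auto
  have "RS_sum (\<lambda>v. signature_coord \<gamma> a v (fst p)) (\<lambda>v. \<gamma> v \<bullet> snd p) xs (butlast xs)
      = (\<Sum>i<n. signature_coord \<gamma> a (X i) (fst p) * (\<Delta> i \<bullet> snd p))" for p
    unfolding RS_sum_def n_def X_def \<Delta>_def by (intro sum.cong) (auto simp: nth_butlast inner_diff_left)
  then have "L2_set (\<lambda>p. RS_sum (\<lambda>v. signature_coord \<gamma> a v (fst p)) (\<lambda>v. \<gamma> v \<bullet> snd p) xs (butlast xs))
           (words k \<times> Basis)
      \<le> (\<Sum>i<n. L2_set (\<lambda>p. signature_coord \<gamma> a (X i) (fst p) * (\<Delta> i \<bullet> snd p)) (words k \<times> Basis))"
    using L2_set_sum_le[of "{..<n}"] by simp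
  also have "\<dots> = (\<Sum>i<n. sig_norm \<gamma> a (X i) k * norm (\<Delta> i))"
    unfolding sig_norm_def by (simp add: L2_set_times_inner_Basis finite_words)
  also have "\<dots> \<le> (\<Sum>i<n. L (X i) ^ k / fact k * (L (X (Suc i)) - L (X i)))"
  proof (rule sum_mono)
    fix i assume "i \<in> {..<n}"
    then have "i < n" by simp
    have "sig_norm \<gamma> a (X i) k \<le> L (X i) ^ k / fact k"
      using IH[of "X i"] X(1,2)[OF \<open>i < n\<close>] unfolding L_def by simp
    moreover have "norm (\<Delta> i) \<le> L (X (Suc i)) - L (X i)" using L(1)[OF \<open>i < n\<close>] by simp
    ultimately show "sig_norm \<gamma> a (X i) k * norm (\<Delta> i) \<le> L (X i) ^ k / fact k * (L (X (Suc i)) - L (X i))"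
      by (intro mult_mono') (simp_all add: sig_norm_def)
  qed
  also have "\<dots> \<le> (L (X n) ^ Suc k - L (X 0) ^ Suc k) / fact (Suc k)"
  proof (rule sum_power_div_fact_increments_le)
    fix i assume "i < n"
    then show "0 \<le> L (X i) \<and> L (X i) \<le> L (X (Suc i))"
      using L[OF \<open>i < n\<close>] norm_ge_zero[of "\<Delta> i"] by linarith
  qed
  also have "\<dots> \<le> L u ^ Suc k / fact (Suc k)"
  proof -
    have "0 \<le> L a" unfolding L_def
      using path_len_nonneg[OF bv order_refl] interval_partition_le[OF xs] \<open>u \<le> b\<close> by simp
    then show ?thesis using ends(1,2) by (intro divide_right_mono) simp_all
  qed
  finally show ?thesis unfolding L_def .
qed

lemma sig_norm_Suc_le:
  assumes IH: "\<And>x. x \<in> {a..b} \<Longrightarrow> sig_norm \<gamma> a x k \<le> path_len \<gamma> a x ^ k / fact k"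
    and u: "a \<le> u" "u \<le> b"
  shows "sig_norm \<gamma> a u (Suc k) \<le> path_len \<gamma> a u ^ Suc k / fact (Suc k)"
proof -
  define J where "J p = signature_coord \<gamma> a u (fst p @ [snd p])" for p :: "'v list \<times> 'v"
  have "sig_norm \<gamma> a u (Suc k) = L2_set J (words k \<times> Basis)"
    unfolding sig_norm_def L2_set_def words_Suc J_def
    by (subst sum.reindex[OF inj_on_snoc_words]) (simp add: o_def)
  also have "\<dots> \<le> path_len \<gamma> a u ^ Suc k / fact (Suc k)"
  proof (rule L2_set_RS_integral_le[OF _ u(1) _ sig_norm_RS_sum_le[OF IH u(2)]])
    show "finite (words k \<times> (Basis :: 'v set))" by (simp add: finite_words)
    show "has_RS_integral (\<lambda>v. signature_coord \<gamma> a v (fst p)) (\<lambda>v. \<gamma> v \<bullet> snd p) a u (J p)" for p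
      using has_RS_integral_iter_int[OF u, of "rev (fst p)" "snd p"]
      unfolding J_def signature_coord_def by simp
  qed
  finally show ?thesis .
qed

lemma sig_norm_le:
  assumes "x \<in> {a..b}"
  shows "sig_norm \<gamma> a x k \<le> path_len \<gamma> a x ^ k / fact k"
  using assms
proof (induction k arbitrary: x)
  case 0
  then show ?case unfolding sig_norm_def words_0 L2_set_def signature_coord_def by simp
next
  case (Suc k)
  then show ?case using sig_norm_Suc_le[OF Suc.IH, of x] by auto
qed

end

section \<open>Convergence of the kernel series\<close>

lemma abs_sig_inner_le_path_len:
  fixes \<gamma> \<sigma> :: "real \<Rightarrow> 'v::euclidean_space"
  assumes "continuous_on {a..b} \<gamma>" "continuous_on {a..b} \<sigma>"
    and "bounded_variation_on \<gamma> a b" "bounded_variation_on \<sigma> a b"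
    and "s \<in> {a..b}" "t \<in> {a..b}"
  shows "\<bar>sig_inner k \<gamma> \<sigma> a s t\<bar> \<le> (path_len \<gamma> a s * path_len \<sigma> a t) ^ k / (fact k)\<^sup>2"
proof -
  have "\<bar>sig_inner k \<gamma> \<sigma> a s t\<bar> \<le> sig_norm \<gamma> a s k * sig_norm \<sigma> a t k" by (rule abs_sig_inner_le)
  also have "\<dots> \<le> (path_len \<gamma> a s ^ k / fact k) * (path_len \<sigma> a t ^ k / fact k)"
    using sig_norm_le[OF assms(1,3,5)] sig_norm_le[OF assms(2,4,6)]
      path_len_nonneg[OF assms(3)] assms(5)
    by (intro mult_mono) (auto simp: sig_norm_def)
  also have "\<dots> = (path_len \<gamma> a s * path_len \<sigma> a t) ^ k / (fact k)\<^sup>2"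
    by (simp add: power_mult_distrib power2_eq_square)
  finally show ?thesis .
qed

lemma summable_coeff_power_div_fact_sq:
  fixes \<phi> :: "nat \<Rightarrow> real"
  assumes "\<And>C. C > 0 \<Longrightarrow> summable (\<lambda>k. C ^ k * \<bar>\<phi> k\<bar> / (fact k)\<^sup>2)" "0 \<le> x"
  shows "summable (\<lambda>k. \<bar>\<phi> k\<bar> * x ^ k / (fact k)\<^sup>2)"
proof (rule summable_comparison_test'[OF assms(1)[of "x + 1"]])
  fix k
  have "x ^ k \<le> (x + 1) ^ k" using assms(2) by (intro power_mono) auto
  then show "norm (\<bar>\<phi> k\<bar> * x ^ k / (fact k)\<^sup>2) \<le> (x + 1) ^ k * \<bar>\<phi> k\<bar> / (fact k)\<^sup>2"
    using assms(2) by (simp add: divide_right_mono mult.commute mult_left_mono)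
qed (use assms(2) in auto)

lemma partial_sums_tendsto_and_tail_le:
  fixes f B :: "nat \<Rightarrow> real"
  assumes "\<And>k. \<bar>f k\<bar> \<le> B k" "summable B"
  shows "(\<lambda>N. \<Sum>k\<le>N. f k) \<longlonglongrightarrow> (\<Sum>k. f k)"
    and "\<bar>(\<Sum>k. f k) - (\<Sum>k\<le>N. f k)\<bar> \<le> (\<Sum>k. B (k + N + 1))"
proof -
  have "summable f" using assms by (intro summable_comparison_test'[OF assms(2), where N = 0]) simp
  then show "(\<lambda>N. \<Sum>k\<le>N. f k) \<longlonglongrightarrow> (\<Sum>k. f k)" by (rule summable_LIMSEQ')
  have tail: "summable (\<lambda>k. B (k + Suc N))" by (rule summable_ignore_initial_segment[OF assms(2)])
  then have "summable (\<lambda>k. \<bar>f (k + Suc N)\<bar>)"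
    using assms(1) by (intro summable_comparison_test'[OF tail, where N = 0]) simp
  have "(\<Sum>k. f k) - (\<Sum>k\<le>N. f k) = (\<Sum>k. f (k + Suc N))"
    using suminf_split_initial_segment[OF \<open>summable f\<close>, of "Suc N"] by (simp add: lessThan_Suc_atMost)
  also have "\<bar>\<dots>\<bar> \<le> (\<Sum>k. \<bar>f (k + Suc N)\<bar>)" by (rule summable_rabs[OF \<open>summable (\<lambda>k. \<bar>f (k + Suc N)\<bar>)\<close>])
  also have "\<dots> \<le> (\<Sum>k. B (k + Suc N))"
    by (rule suminf_le[OF _ \<open>summable (\<lambda>k. \<bar>f (k + Suc N)\<bar>)\<close> tail]) (simp add: assms(1))
  finally show "\<bar>(\<Sum>k. f k) - (\<Sum>k\<le>N. f k)\<bar> \<le> (\<Sum>k. B (k + N + 1))" by simp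
qed

theorem mainTheorem5:
  fixes \<gamma> \<sigma> :: "real \<Rightarrow> 'v::euclidean_space" and \<phi> :: "nat \<Rightarrow> real" and a b s t :: real
  assumes "a \<le> b"
    and "continuous_on {a..b} \<gamma>" and "continuous_on {a..b} \<sigma>"
    and "bounded_variation_on \<gamma> a b" and "bounded_variation_on \<sigma> a b"
    and "\<And>C. C > 0 \<Longrightarrow> summable (\<lambda>k. C ^ k * \<bar>\<phi> k\<bar> / (fact k)\<^sup>2)"
    and "s \<in> {a..b}" and "t \<in> {a..b}"
  shows "(\<lambda>N. sig_kernel_trunc N \<phi> \<gamma> \<sigma> a s t) \<longlonglongrightarrow> sig_kernel \<phi> \<gamma> \<sigma> a s t
    \<and> (\<forall>N. \<bar>sig_kernel \<phi> \<gamma> \<sigma> a s t - sig_kernel_trunc N \<phi> \<gamma> \<sigma> a s t\<bar>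
           \<le> (\<Sum>k. \<bar>\<phi> (k + N + 1)\<bar> * (path_len \<gamma> a s * path_len \<sigma> a t) ^ (k + N + 1)
                   / (fact (k + N + 1))\<^sup>2))"
proof -
  define L where "L = path_len \<gamma> a s * path_len \<sigma> a t"
  have "0 \<le> L"
    using path_len_nonneg[OF assms(4)] path_len_nonneg[OF assms(5)] assms(7,8) unfolding L_def by simp
  have "\<bar>\<phi> k * sig_inner k \<gamma> \<sigma> a s t\<bar> \<le> \<bar>\<phi> k\<bar> * L ^ k / (fact k)\<^sup>2" for k
    using abs_sig_inner_le_path_len[OF assms(2-5,7,8), of k]
    unfolding L_def abs_mult times_divide_eq_right[symmetric] by (intro mult_left_mono) auto
  note tail = partial_sums_tendsto_and_tail_le[OF this
      summable_coeff_power_div_fact_sq[OF assms(6) \<open>0 \<le> L\<close>]]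
  show ?thesis
    using tail unfolding sig_kernel_def sig_kernel_trunc_def L_def by simp
qed

end
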